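(* Let $G$ be a countable abelian group, let $B$ be a Bohr neighborhood of $0$ in $G$, and let $c\in\mathbb Z$ be such that $cG$ has finite index in $G$. Then $cB=\{cb:b\in B\}$ contains a Bohr neighborhood of $0$ in $G$.
   Context: $G$ is discrete. A Bohr neighborhood of $0$ in $G$ is a set $\{g\in G:|\chi_i(g)-1|<\varepsilon,\ 1\le i\le r\}$ for some $r\in\mathbb N$, homomorphisms $\chi_1,\dots,\chi_r:G\to\{z\in\mathbb C:|z|=1\}$ and $\varepsilon>0$. $cG=\{cg:g\in G\}$. *)

theory Defs
  imports Complex_Main "HOL-Library.Countable"
begin

text \<open>The group G is the (discrete) type 'a, an abelian group written additively.\<close>

definition zmult :: "int \<Rightarrow> 'a::ab_group_add \<Rightarrow> 'a" where
  "zmult c g = (if 0 \<le> c then (\<Sum>_<nat c. g) else - (\<Sum>_<nat (- c). g))"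

definition character :: "('a::ab_group_add \<Rightarrow> complex) \<Rightarrow> bool" where
  "character \<chi> \<longleftrightarrow> (\<forall>x y. \<chi> (x + y) = \<chi> x * \<chi> y) \<and> (\<forall>x. norm (\<chi> x) = 1)"

definition bohr_nbhd :: "'a::ab_group_add set \<Rightarrow> bool" where
  "bohr_nbhd B \<longleftrightarrow> (\<exists>(r::nat) (\<chi>s :: nat \<Rightarrow> 'a \<Rightarrow> complex) (\<epsilon>::real).
      \<epsilon> > 0 \<and> (\<forall>i<r. character (\<chi>s i)) \<and>
      B = {g. \<forall>i<r. norm (\<chi>s i g - 1) < \<epsilon>})"

definition finite_index :: "'a::ab_group_add set \<Rightarrow> bool" where
  "finite_index H \<longleftrightarrow> finite ((\<lambda>g. (\<lambda>h. g + h) ` H) ` UNIV)"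

end

theory Submission
  imports Defs
begin

lemma zmult_add_left: "zmult (a + b) g = zmult a g + zmult b g"
proof -
  define s where "s n = (\<Sum>_<n. g)" for n :: nat
  have s_add: "s (m + n) = s m + s n" for m n
    unfolding s_def by (induction n) (auto simp: add.assoc)
  have "nat (a + b) + nat (- a) + nat (- b) = nat (- (a + b)) + nat a + nat b"
    by linarith
  then have "s (nat (a + b) + nat (- a) + nat (- b)) = s (nat (- (a + b)) + nat a + nat b)"
    by (rule arg_cong)
  then have balance: "s (nat (a + b)) + s (nat (- a)) + s (nat (- b))
      = s (nat (- (a + b))) + s (nat a) + s (nat b)"
    by (simp only: s_add)
  have regroup: "x - x' = (y - y') + (z - z')" if "x + y' + z' = x' + y + z" for x x' y y' z z' :: 'a
    using that by (simp add: algebra_simps)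
  have zmult_s: "zmult c g = s (nat c) - s (nat (- c))" for c
    by (simp add: zmult_def s_def)
  show ?thesis
    unfolding zmult_s by (rule regroup[OF balance])
qed

lemma additive_zmult: "additive (zmult c)"
  by unfold_locales (simp add: zmult_def sum.distrib)

lemma additive_zmult_left: "additive (\<lambda>c. zmult c g)"
  by unfold_locales (rule zmult_add_left)

lemmas zmult_add_right = additive.add[OF additive_zmult]
lemmas zmult_minus_right = additive.minus[OF additive_zmult]
lemmas zmult_diff_right = additive.diff[OF additive_zmult]
lemmas zmult_0_right [simp] = additive.zero[OF additive_zmult]
lemmas zmult_0_left [simp] = additive.zero[OF additive_zmult_left]
lemmas zmult_minus_left = additive.minus[OF additive_zmult_left]
lemmas zmult_diff_left = additive.diff[OF additive_zmult_left]

lemma zmult_1_left [simp]: "zmult 1 x = x"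
  by (simp add: zmult_def)

lemma zmult_mult: "zmult (a * b) x = zmult a (zmult b x)"
proof (induction a rule: int_induct[where k = 0])
  case (step1 i)
  then show ?case by (simp add: distrib_right zmult_add_left)
next
  case (step2 i)
  then show ?case by (simp add: left_diff_distrib zmult_diff_left)
qed simp

definition add_subgroup :: "'a::ab_group_add set \<Rightarrow> bool" where
  "add_subgroup H \<longleftrightarrow> 0 \<in> H \<and> (\<forall>x\<in>H. \<forall>y\<in>H. x + y \<in> H) \<and> (\<forall>x\<in>H. - x \<in> H)"

lemma add_subgroupD:
  assumes "add_subgroup H"
  shows add_subgroup_0: "0 \<in> H"
    and add_subgroup_add: "x \<in> H \<Longrightarrow> y \<in> H \<Longrightarrow> x + y \<in> H"
    and add_subgroup_minus: "x \<in> H \<Longrightarrow> - x \<in> H"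
  using assms unfolding add_subgroup_def by blast+

lemma add_subgroup_diff: "add_subgroup H \<Longrightarrow> x \<in> H \<Longrightarrow> y \<in> H \<Longrightarrow> x - y \<in> H"
  unfolding diff_conv_add_uminus by (intro add_subgroup_add add_subgroup_minus)

lemma add_subgroup_zmult:
  assumes "add_subgroup H" "x \<in> H"
  shows "zmult m x \<in> H"
proof (induction m rule: int_induct[where k = 0])
  case base
  show ?case using add_subgroup_0[OF assms(1)] by simp
next
  case (step1 i)
  then show ?case using assms by (simp add: zmult_add_left add_subgroup_add)
next
  case (step2 i)
  then show ?case using assms by (simp add: zmult_diff_left add_subgroup_diff)
qed

lemma add_subgroup_UNIV: "add_subgroup UNIV"
  by (simp add: add_subgroup_def)

lemma add_subgroup_range:
  assumes "additive f"
  shows "add_subgroup (range f)"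
  unfolding add_subgroup_def
proof (intro conjI ballI)
  show "0 \<in> range f" by (rule range_eqI[of _ _ 0]) (simp add: additive.zero[OF assms])
  fix x y assume "x \<in> range f" "y \<in> range f"
  then obtain a b where "x = f a" "y = f b" by blast
  then show "x + y \<in> range f" "- x \<in> range f"
    by (simp_all add: additive.add[OF assms, symmetric] additive.minus[OF assms, symmetric])
qed

lemma add_subgroup_kernel: "additive f \<Longrightarrow> add_subgroup {x. f x = 0}"
  by (simp add: add_subgroup_def additive.zero additive.add additive.minus)

lemma coset_of_member:
  assumes "add_subgroup H" "g \<in> H"
  shows "(+) g ` H = H"
proof
  show "(+) g ` H \<subseteq> H" using assms add_subgroup_add by blast
  show "H \<subseteq> (+) g ` H"
  proof
    fix x assume "x \<in> H"
    then have "x - g \<in> H" "x = g + (x - g)" using assms add_subgroup_diff by auto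
    then show "x \<in> (+) g ` H" by blast
  qed
qed

lemma coset_eq_iff:
  assumes N: "add_subgroup N"
  shows "(+) a ` N = (+) b ` N \<longleftrightarrow> a - b \<in> N"
proof
  assume "(+) a ` N = (+) b ` N"
  then have "a \<in> (+) b ` N"
    using add_subgroup_0[OF N] by (metis add_0_right imageI)
  then show "a - b \<in> N" by auto
next
  assume "a - b \<in> N"
  then have "(+) a ` N = (+) b ` ((+) (a - b) ` N)"
    by (simp add: image_image add.assoc)
  then show "(+) a ` N = (+) b ` N"
    using coset_of_member[OF N \<open>a - b \<in> N\<close>] by simp
qed

lemma add_subgroup_multiples_dvd:
  assumes H: "add_subgroup H" and n: "n > 0" "zmult (int n) g \<in> H"
  obtains N :: nat where "N > 0" "\<And>m. zmult m g \<in> H \<longleftrightarrow> int N dvd m"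
proof
  define N where "N = (LEAST N. N > 0 \<and> zmult (int N) g \<in> H)"
  have N: "N > 0" "zmult (int N) g \<in> H"
    unfolding N_def using LeastI[of "\<lambda>N. N > 0 \<and> zmult (int N) g \<in> H", OF conjI[OF n]] by auto
  have minimal: "\<not> (k > 0 \<and> zmult (int k) g \<in> H)" if "k < N" for k
    using that unfolding N_def by (rule not_less_Least)
  show "N > 0" by (fact N(1))
  fix m
  have multiple_in: "zmult (int N * q) g \<in> H" for q
    using H N(2) by (simp add: zmult_mult[of q "int N", unfolded mult.commute[of q]] add_subgroup_zmult)
  show "zmult m g \<in> H \<longleftrightarrow> int N dvd m"
  proof
    assume m: "zmult m g \<in> H"
    have "zmult (m mod int N) g = zmult m g - zmult (int N * (m div int N)) g"
      by (simp add: zmult_diff_left[symmetric] minus_div_mult_eq_mod[symmetric] mult.commute)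
    then have rest: "zmult (m mod int N) g \<in> H"
      using add_subgroup_diff[OF H m multiple_in] by simp
    obtain k where k: "m mod int N = int k"
      using N(1) by (metis of_nat_0_less_iff pos_mod_sign zero_le_imp_eq_int)
    have "k < N"
      using N(1) k by (metis of_nat_0_less_iff of_nat_less_iff pos_mod_bound)
    then have "k = 0"
      using minimal rest k by auto
    then show "int N dvd m"
      using k by (simp add: dvd_eq_mod_eq_0)
  next
    assume "int N dvd m"
    then show "zmult m g \<in> H" using multiple_in by (auto elim: dvdE)
  qed
qed

definition partial_character :: "'a::ab_group_add set \<Rightarrow> ('a \<Rightarrow> complex) \<Rightarrow> bool" where
  "partial_character H \<phi> \<longleftrightarrow> add_subgroup H \<and>
     (\<forall>x\<in>H. \<forall>y\<in>H. \<phi> (x + y) = \<phi> x * \<phi> y) \<and> (\<forall>x\<in>H. norm (\<phi> x) = 1)"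

lemma character_iff_partial_character: "character \<chi> \<longleftrightarrow> partial_character UNIV \<chi>"
  by (simp add: character_def partial_character_def add_subgroup_UNIV)

lemma unit_mult_cnj: "norm (z::complex) = 1 \<Longrightarrow> z * cnj z = 1"
  by (metis complex_norm_square of_real_1 one_power2)

context
  fixes H :: "'a::ab_group_add set" and \<phi> :: "'a \<Rightarrow> complex"
  assumes \<phi>: "partial_character H \<phi>"
begin

lemma partial_character_subgroup: "add_subgroup H"
  and partial_character_add: "x \<in> H \<Longrightarrow> y \<in> H \<Longrightarrow> \<phi> (x + y) = \<phi> x * \<phi> y"
  and partial_character_norm: "x \<in> H \<Longrightarrow> norm (\<phi> x) = 1"
  using \<phi> by (simp_all add: partial_character_def)

lemma partial_character_nonzero: "x \<in> H \<Longrightarrow> \<phi> x \<noteq> 0"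
  using partial_character_norm by force

lemma partial_character_0: "\<phi> 0 = 1"
proof -
  have "\<phi> 0 * \<phi> 0 = \<phi> 0 * 1"
    using partial_character_add[of 0 0] add_subgroup_0[OF partial_character_subgroup] by simp
  then show ?thesis
    using partial_character_nonzero add_subgroup_0[OF partial_character_subgroup] by simp
qed

lemma partial_character_minus:
  assumes "x \<in> H"
  shows "\<phi> (- x) = cnj (\<phi> x)"
proof -
  have "\<phi> x * \<phi> (- x) = \<phi> x * cnj (\<phi> x)"
    using partial_character_add[of x "- x"] add_subgroup_minus[OF partial_character_subgroup]
      assms partial_character_0 unit_mult_cnj[OF partial_character_norm] by simp
  then show ?thesis
    using partial_character_nonzero[OF assms] by simp
qed

lemma partial_character_diff:
  assumes "x \<in> H" "y \<in> H"
  shows "\<phi> (x - y) = \<phi> x * cnj (\<phi> y)"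
  using assms partial_character_add[of x "- y"] partial_character_minus[of y]
    add_subgroup_minus[OF partial_character_subgroup] by simp

lemma partial_character_zmult:
  assumes "x \<in> H"
  shows "\<phi> (zmult m x) = \<phi> x powi m"
proof (induction m rule: int_induct[where k = 0])
  case base
  show ?case by (simp add: partial_character_0)
next
  case (step1 i)
  then show ?case
    using assms partial_character_subgroup partial_character_nonzero[OF assms]
    by (simp add: zmult_add_left partial_character_add add_subgroup_zmult power_int_add)
next
  case (step2 i)
  have "\<phi> (zmult (i - 1) x) * \<phi> x = \<phi> (zmult (i - 1) x + x)"
    using assms partial_character_subgroup by (simp add: partial_character_add add_subgroup_zmult)
  also have "\<dots> = \<phi> (zmult i x)"
    by (simp add: zmult_diff_left)
  finally have "\<phi> (zmult (i - 1) x) * \<phi> x = \<phi> (zmult i x)" .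
  then show ?case
    using step2 partial_character_nonzero[OF assms] by (simp add: power_int_diff field_simps)
qed

end

lemma
  assumes "character \<chi>"
  shows character_add: "\<chi> (x + y) = \<chi> x * \<chi> y"
    and character_norm: "norm (\<chi> x) = 1"
    and character_0: "\<chi> 0 = 1"
    and character_zmult: "\<chi> (zmult m x) = \<chi> x powi m"
  using assms
  by (simp_all add: character_iff_partial_character partial_character_add partial_character_norm
      partial_character_0 partial_character_zmult)

lemma partial_character_extend_step:
  assumes \<phi>: "partial_character H \<phi>" and z: "norm z = 1"
    and compatible: "\<And>m. zmult m g \<in> H \<Longrightarrow> z powi m = \<phi> (zmult m g)"
  obtains \<psi> where "partial_character {h + zmult k g |h k. h \<in> H} \<psi>"
    "\<And>x. x \<in> H \<Longrightarrow> \<psi> x = \<phi> x" "\<psi> g = z"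
proof -
  let ?H' = "{h + zmult k g |h k. h \<in> H}"
  have H: "add_subgroup H" using \<phi> by (rule partial_character_subgroup)
  have z0: "z \<noteq> 0" using z by auto
  have well_defined: "\<phi> h * z powi k = \<phi> h' * z powi k'"
    if "h \<in> H" "h' \<in> H" "h + zmult k g = h' + zmult k' g" for h h' k k'
  proof -
    have "zmult (k - k') g = h' - h"
      using that(3) by (simp add: zmult_diff_left algebra_simps)
    then have "z powi (k - k') = \<phi> h' * cnj (\<phi> h)"
      using compatible add_subgroup_diff[OF H that(2,1)] partial_character_diff[OF \<phi> that(2,1)]
      by metis
    then have "\<phi> h * z powi k = \<phi> h' * (\<phi> h * cnj (\<phi> h)) * z powi k'"
      using z0 by (simp add: power_int_diff field_simps)
    then show ?thesis
      using unit_mult_cnj[OF partial_character_norm[OF \<phi> that(1)]] by simp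
  qed
  define \<psi> where "\<psi> x = (SOME a. \<exists>h k. h \<in> H \<and> x = h + zmult k g \<and> a = \<phi> h * z powi k)" for x
  have \<psi>: "\<psi> (h + zmult k g) = \<phi> h * z powi k" if "h \<in> H" for h k
  proof -
    have "\<exists>h' k'. h' \<in> H \<and> h + zmult k g = h' + zmult k' g \<and> \<psi> (h + zmult k g) = \<phi> h' * z powi k'"
      unfolding \<psi>_def by (rule someI_ex) (use that in blast)
    then show ?thesis using well_defined that by metis
  qed
  have "partial_character ?H' \<psi>"
    unfolding partial_character_def add_subgroup_def
  proof (intro conjI ballI)
    have "0 = 0 + zmult 0 g" by simp
    then show "0 \<in> ?H'"
      using add_subgroup_0[OF H] by blast
  next
    fix x y assume "x \<in> ?H'" "y \<in> ?H'"
    then obtain h1 k1 h2 k2 where h: "h1 \<in> H" "h2 \<in> H" "x = h1 + zmult k1 g" "y = h2 + zmult k2 g"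
      by blast
    have xy: "x + y = (h1 + h2) + zmult (k1 + k2) g"
      using h by (simp add: zmult_add_left algebra_simps)
    have h12: "h1 + h2 \<in> H" using add_subgroup_add[OF H h(1,2)] .
    show "x + y \<in> ?H'" using xy h12 by blast
    show "\<psi> (x + y) = \<psi> x * \<psi> y"
      unfolding xy using h h12 z0 by (simp add: \<psi> partial_character_add[OF \<phi>] power_int_add)
  next
    fix x assume "x \<in> ?H'"
    then obtain h k where h: "h \<in> H" "x = h + zmult k g" by blast
    have "- x = (- h) + zmult (- k) g" using h by (simp add: zmult_minus_left)
    then show "- x \<in> ?H'" using add_subgroup_minus[OF H h(1)] by blast
    show "norm (\<psi> x) = 1"
      using h z by (simp add: \<psi> norm_mult norm_power_int partial_character_norm[OF \<phi>])
  qed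
  moreover have "\<psi> x = \<phi> x" if "x \<in> H" for x
    using \<psi>[OF that, of 0] by simp
  moreover have "\<psi> g = z"
    using \<psi>[OF add_subgroup_0[OF H], of 1] by (simp add: partial_character_0[OF \<phi>])
  ultimately show ?thesis by (rule that)
qed

lemma partial_character_compatible_root:
  assumes \<phi>: "partial_character H \<phi>"
  obtains z where "norm z = 1" "\<And>m. zmult m g \<in> H \<Longrightarrow> z powi m = \<phi> (zmult m g)"
proof (cases "\<exists>n > 0. zmult (int n) g \<in> H")
  case False
  have only_zero: "m = 0" if "zmult m g \<in> H" for m
  proof (rule ccontr)
    assume "m \<noteq> 0"
    have "zmult (- m) g \<in> H"
      using that add_subgroup_minus[OF partial_character_subgroup[OF \<phi>]] by (simp add: zmult_minus_left)
    moreover have "int (nat \<bar>m\<bar>) = m \<or> int (nat \<bar>m\<bar>) = - m"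
      by arith
    ultimately have "zmult (int (nat \<bar>m\<bar>)) g \<in> H"
      using that by (elim disjE) (simp_all only:)
    moreover have "nat \<bar>m\<bar> > 0"
      using \<open>m \<noteq> 0\<close> by simp
    ultimately show False
      using False by blast
  qed
  have "1 powi m = \<phi> (zmult m g)" if "zmult m g \<in> H" for m
    using only_zero[OF that] by (simp add: partial_character_0[OF \<phi>])
  then show ?thesis
    using that[of 1] by simp
next
  case True
  then obtain n where "n > 0" "zmult (int n) g \<in> H" by blast
  then obtain N where N: "N > 0" "\<And>m. zmult m g \<in> H \<longleftrightarrow> int N dvd m"
    using add_subgroup_multiples_dvd[OF partial_character_subgroup[OF \<phi>]] by metis
  define w where "w = \<phi> (zmult (int N) g)"
  have "norm w = 1"
    using N partial_character_norm[OF \<phi>] by (simp add: w_def)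
  moreover have "w \<noteq> 0"
    using \<open>norm w = 1\<close> by (metis norm_zero zero_neq_one)
  ultimately have "cis (Arg w) = w"
    by (simp add: cis_Arg sgn_eq)
  define z where "z = cis (Arg w / real N)"
  have "z ^ N = w"
    using N(1) \<open>cis (Arg w) = w\<close> by (simp add: z_def DeMoivre)
  have "z powi m = \<phi> (zmult m g)" if m: "zmult m g \<in> H" for m
  proof -
    obtain q where q: "m = int N * q" using N(2) m by (auto elim: dvdE)
    have "z powi m = w powi q"
      using q \<open>z ^ N = w\<close> by (simp add: power_int_mult)
    also have "\<dots> = \<phi> (zmult q (zmult (int N) g))"
      using N(2) partial_character_zmult[OF \<phi>] by (simp add: w_def)
    also have "\<dots> = \<phi> (zmult m g)"
      using q by (simp add: zmult_mult[symmetric] mult.commute)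
    finally show ?thesis .
  qed
  then show ?thesis using that[of z] by (simp add: z_def)
qed

definition char_graph :: "('a::ab_group_add \<times> complex) set \<Rightarrow> bool" where
  "char_graph F \<longleftrightarrow> (\<forall>x a b. (x, a) \<in> F \<longrightarrow> (x, b) \<in> F \<longrightarrow> a = b) \<and> (0, 1) \<in> F \<and>
     (\<forall>x a y b. (x, a) \<in> F \<longrightarrow> (y, b) \<in> F \<longrightarrow> (x + y, a * b) \<in> F) \<and>
     (\<forall>x a. (x, a) \<in> F \<longrightarrow> (- x, cnj a) \<in> F \<and> norm a = 1)"

lemma char_graph_graph:
  assumes "partial_character H \<phi>"
  shows "char_graph ((\<lambda>x. (x, \<phi> x)) ` H)"
  using assms partial_character_0[OF assms] partial_character_minus[OF assms]
  unfolding char_graph_def partial_character_def add_subgroup_def by auto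

lemma char_graph_partial_character:
  assumes F: "char_graph F"
  defines "\<phi> \<equiv> \<lambda>x. THE a. (x, a) \<in> F"
  shows "partial_character (Domain F) \<phi>" and "F = (\<lambda>x. (x, \<phi> x)) ` Domain F"
proof -
  have \<phi>_eq: "\<phi> x = a" if "(x, a) \<in> F" for x a
    using F that unfolding \<phi>_def char_graph_def by (intro the_equality) auto
  show "F = (\<lambda>x. (x, \<phi> x)) ` Domain F"
    using \<phi>_eq by force
  show "partial_character (Domain F) \<phi>"
    unfolding partial_character_def add_subgroup_def
  proof (intro conjI ballI)
    show "0 \<in> Domain F" using F unfolding char_graph_def by auto
    fix x assume "x \<in> Domain F"
    then obtain a where a: "(x, a) \<in> F" by auto
    show "- x \<in> Domain F" "norm (\<phi> x) = 1"
      using F a \<phi>_eq[OF a] unfolding char_graph_def by blast+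
    fix y assume "y \<in> Domain F"
    then obtain b where b: "(y, b) \<in> F" by auto
    have "(x + y, a * b) \<in> F" using F a b unfolding char_graph_def by blast
    then show "x + y \<in> Domain F" "\<phi> (x + y) = \<phi> x * \<phi> y"
      using \<phi>_eq a b by auto
  qed
qed

lemma char_graph_chain_Union:
  assumes "chain\<^sub>\<subseteq> C" "C \<noteq> {}" and graphs: "\<And>F. F \<in> C \<Longrightarrow> char_graph F"
  shows "char_graph (\<Union>C)"
proof -
  have common: "\<exists>F\<in>C. p \<in> F \<and> q \<in> F" if "p \<in> \<Union>C" "q \<in> \<Union>C" for p q
    using assms(1) that unfolding chain_subset_def by blast
  show ?thesis
    unfolding char_graph_def
  proof (intro conjI allI impI)
    fix x a b assume "(x, a) \<in> \<Union>C" "(x, b) \<in> \<Union>C"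
    then obtain F where "F \<in> C" "(x, a) \<in> F" "(x, b) \<in> F" using common by blast
    then show "a = b" using graphs[of F] unfolding char_graph_def by blast
  next
    obtain F where "F \<in> C" using assms(2) by blast
    then show "(0, 1) \<in> \<Union>C" using graphs[of F] unfolding char_graph_def by blast
  next
    fix x a y b assume "(x, a) \<in> \<Union>C" "(y, b) \<in> \<Union>C"
    then obtain F where "F \<in> C" "(x, a) \<in> F" "(y, b) \<in> F" using common by blast
    then show "(x + y, a * b) \<in> \<Union>C" using graphs[of F] unfolding char_graph_def by blast
  next
    fix x a assume "(x, a) \<in> \<Union>C"
    then obtain F where "F \<in> C" "(x, a) \<in> F" by blast
    moreover have "(- x, cnj a) \<in> F" "norm a = 1"
      using graphs[OF \<open>F \<in> C\<close>] \<open>(x, a) \<in> F\<close> by (simp_all add: char_graph_def)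
    ultimately show "(- x, cnj a) \<in> \<Union>C" "norm a = 1" by blast+
  qed
qed

theorem partial_character_extends:
  assumes \<phi>: "partial_character H \<phi>"
  obtains \<chi> where "character \<chi>" "\<And>x. x \<in> H \<Longrightarrow> \<chi> x = \<phi> x"
proof -
  define A where "A = {F. char_graph F \<and> (\<lambda>x. (x, \<phi> x)) ` H \<subseteq> F}"
  have "\<forall>C\<in>chains A. \<exists>U\<in>A. \<forall>F\<in>C. F \<subseteq> U"
  proof
    fix C assume C: "C \<in> chains A"
    show "\<exists>U\<in>A. \<forall>F\<in>C. F \<subseteq> U"
    proof (cases "C = {}")
      case True
      then show ?thesis using char_graph_graph[OF \<phi>] unfolding A_def by auto
    next
      case False
      have "char_graph (\<Union>C)"
        by (rule char_graph_chain_Union) (use C False in \<open>auto simp: chains_def A_def\<close>)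
      moreover have "(\<lambda>x. (x, \<phi> x)) ` H \<subseteq> \<Union>C"
        using C False unfolding chains_def A_def by auto
      ultimately show ?thesis unfolding A_def by auto
    qed
  qed
  then obtain M where "M \<in> A" and maximal: "\<And>F. F \<in> A \<Longrightarrow> M \<subseteq> F \<Longrightarrow> F = M"
    by (meson Zorn_Lemma2)
  then have M: "char_graph M" "(\<lambda>x. (x, \<phi> x)) ` H \<subseteq> M" unfolding A_def by auto
  define \<chi> where "\<chi> x = (THE a. (x, a) \<in> M)" for x
  have \<chi>: "partial_character (Domain M) \<chi>" and M_graph: "M = (\<lambda>x. (x, \<chi> x)) ` Domain M"
    unfolding \<chi>_def by (fact char_graph_partial_character[OF M(1)])+
  have "Domain M = UNIV"
  proof (rule ccontr)
    assume "Domain M \<noteq> UNIV"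
    then obtain g where g: "g \<notin> Domain M" by auto
    obtain z where z: "norm z = 1" "\<And>m. zmult m g \<in> Domain M \<Longrightarrow> z powi m = \<chi> (zmult m g)"
      using partial_character_compatible_root[OF \<chi>] by blast
    obtain \<psi> where \<psi>: "partial_character {h + zmult k g |h k. h \<in> Domain M} \<psi>"
      "\<And>x. x \<in> Domain M \<Longrightarrow> \<psi> x = \<chi> x"
      using partial_character_extend_step[OF \<chi> z] by blast
    let ?F = "(\<lambda>x. (x, \<psi> x)) ` {h + zmult k g |h k. h \<in> Domain M}"
    have "x + zmult 0 g \<in> {h + zmult k g |h k. h \<in> Domain M}" if "x \<in> Domain M" for x
      using that by blast
    then have "M \<subseteq> ?F"
      using \<psi>(2) by (subst M_graph) force
    moreover have "?F \<in> A"
      using char_graph_graph[OF \<psi>(1)] M(2) \<open>M \<subseteq> ?F\<close> unfolding A_def by blast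
    ultimately have "?F = M" by (rule maximal[rotated])
    moreover have "0 + zmult 1 g \<in> {h + zmult k g |h k. h \<in> Domain M}"
      using add_subgroup_0[OF partial_character_subgroup[OF \<chi>]] by blast
    ultimately show False
      using g by force
  qed
  then have "character \<chi>"
    using \<chi> by (simp add: character_iff_partial_character)
  moreover have "\<chi> x = \<phi> x" if "x \<in> H" for x
  proof -
    have "(x, \<phi> x) \<in> (\<lambda>x. (x, \<chi> x)) ` Domain M"
      using M(2) that by (subst M_graph[symmetric]) blast
    then show ?thesis by auto
  qed
  ultimately show ?thesis by (rule that)
qed

lemma separating_character:
  assumes H: "add_subgroup H" and g: "g \<notin> H" and n: "n > 0" "zmult (int n) g \<in> H"
  obtains \<xi> where "character \<xi>" "\<And>h. h \<in> H \<Longrightarrow> \<xi> h = 1" "\<xi> g \<noteq> 1"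
proof -
  obtain N where N: "N > 0" "\<And>m. zmult m g \<in> H \<longleftrightarrow> int N dvd m"
    using add_subgroup_multiples_dvd[OF H n] by blast
  have "N \<noteq> 1"
    using N(2)[of 1] g by auto
  define root where "root k = cis (2 * pi * real k / real N)" for k :: nat
  have roots: "bij_betw root {..<N} {z. z ^ N = 1}"
    unfolding root_def using N(1) by (rule bij_betw_roots_unity)
  define z where "z = root 1"
  have "z ^ N = 1" "z \<noteq> 1"
  proof -
    show "z ^ N = 1"
      using bij_betw_apply[OF roots, of 1] N(1) \<open>N \<noteq> 1\<close> by (simp add: z_def)
    have "root 1 \<noteq> root 0"
      using bij_betw_imp_inj_on[OF roots] N(1) \<open>N \<noteq> 1\<close> by (simp add: inj_on_eq_iff)
    then show "z \<noteq> 1" by (simp add: z_def root_def)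
  qed
  have "norm z = 1"
    by (simp add: z_def root_def)
  have trivial: "partial_character H (\<lambda>_. 1)"
    using H by (simp add: partial_character_def)
  have "z powi m = 1" if m: "zmult m g \<in> H" for m
  proof -
    obtain q where "m = int N * q" using N(2) m by (auto elim: dvdE)
    then show ?thesis using \<open>z ^ N = 1\<close> by (simp add: power_int_mult)
  qed
  then obtain \<psi> where \<psi>: "partial_character {h + zmult k g |h k. h \<in> H} \<psi>"
    "\<And>x. x \<in> H \<Longrightarrow> \<psi> x = 1" "\<psi> g = z"
    using partial_character_extend_step[OF trivial \<open>norm z = 1\<close>] by blast
  obtain \<xi> where \<xi>: "character \<xi>" "\<And>x. x \<in> {h + zmult k g |h k. h \<in> H} \<Longrightarrow> \<xi> x = \<psi> x"
    using partial_character_extends[OF \<psi>(1)] by blast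
  have "\<xi> h = 1" if "h \<in> H" for h
  proof -
    have "h + zmult 0 g \<in> {h + zmult k g |h k. h \<in> H}"
      using that by blast
    then show ?thesis
      using that \<xi>(2) \<psi>(2) by simp
  qed
  moreover have "0 + zmult 1 g \<in> {h + zmult k g |h k. h \<in> H}"
    using add_subgroup_0[OF H] by blast
  then have "\<xi> g = z"
    using \<xi>(2) \<psi>(3) by simp
  ultimately show ?thesis
    using that \<xi>(1) \<open>z \<noteq> 1\<close> by blast
qed

lemma character_factor:
  assumes f: "additive f" and \<theta>: "character \<theta>" and trivial: "\<And>k. f k = 0 \<Longrightarrow> \<theta> k = 1"
  obtains \<psi> where "character \<psi>" "\<And>x. \<psi> (f x) = \<theta> x"
proof -
  have well_defined: "\<theta> x = \<theta> y" if "f x = f y" for x y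
  proof -
    have "\<theta> (x - y) = 1"
      using that trivial by (simp add: additive.diff[OF f])
    then show ?thesis
      using character_add[OF \<theta>, of "x - y" y] by simp
  qed
  define \<phi> where "\<phi> u = \<theta> (SOME x. f x = u)" for u
  have \<phi>: "\<phi> (f x) = \<theta> x" for x
    unfolding \<phi>_def by (rule well_defined) (rule someI[of "\<lambda>y. f y = f x" x], rule refl)
  have "partial_character (range f) \<phi>"
    unfolding partial_character_def
    using add_subgroup_range[OF f]
    by (auto simp: \<phi> additive.add[OF f, symmetric] character_add[OF \<theta>] character_norm[OF \<theta>])
  then obtain \<psi> where "character \<psi>" "\<And>u. u \<in> range f \<Longrightarrow> \<psi> u = \<phi> u"
    using partial_character_extends by blast
  then show ?thesis
    using that \<phi> by simp
qed

lemma bohr_nbhdE: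
  assumes "bohr_nbhd B"
  obtains r :: nat and \<chi>s \<epsilon> where "\<epsilon> > 0" "\<And>i. i < r \<Longrightarrow> character (\<chi>s i)"
    "B = {g. \<forall>i<r. norm (\<chi>s i g - 1) < \<epsilon>}"
  using assms unfolding bohr_nbhd_def by auto

lemma bohr_nbhd_characters:
  assumes "finite X" "\<And>\<chi>. \<chi> \<in> X \<Longrightarrow> character \<chi>" "\<epsilon> > 0"
  shows "bohr_nbhd {g. \<forall>\<chi>\<in>X. norm (\<chi> g - 1) < \<epsilon>}"
proof -
  obtain r :: nat and \<chi>s where X: "X = \<chi>s ` {i. i < r}"
    using finite_imp_nat_seg_image_inj_on[OF assms(1)] by auto
  show ?thesis
    unfolding bohr_nbhd_def
    by (rule exI[of _ r], rule exI[of _ \<chi>s], rule exI[of _ \<epsilon>]) (use assms X in auto)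
qed

lemma bohr_nbhd_Int:
  assumes "bohr_nbhd B\<^sub>1" "bohr_nbhd B\<^sub>2"
  obtains B where "bohr_nbhd B" "B \<subseteq> B\<^sub>1 \<inter> B\<^sub>2"
proof -
  obtain r\<^sub>1 :: nat and \<chi>s\<^sub>1 \<epsilon>\<^sub>1 where 1: "\<epsilon>\<^sub>1 > 0" "\<And>i. i < r\<^sub>1 \<Longrightarrow> character (\<chi>s\<^sub>1 i)"
    "B\<^sub>1 = {g. \<forall>i<r\<^sub>1. norm (\<chi>s\<^sub>1 i g - 1) < \<epsilon>\<^sub>1}"
    using assms(1) by (rule bohr_nbhdE) blast
  obtain r\<^sub>2 :: nat and \<chi>s\<^sub>2 \<epsilon>\<^sub>2 where 2: "\<epsilon>\<^sub>2 > 0" "\<And>i. i < r\<^sub>2 \<Longrightarrow> character (\<chi>s\<^sub>2 i)"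
    "B\<^sub>2 = {g. \<forall>i<r\<^sub>2. norm (\<chi>s\<^sub>2 i g - 1) < \<epsilon>\<^sub>2}"
    using assms(2) by (rule bohr_nbhdE) blast
  let ?X = "\<chi>s\<^sub>1 ` {..<r\<^sub>1} \<union> \<chi>s\<^sub>2 ` {..<r\<^sub>2}"
  have "bohr_nbhd {g. \<forall>\<chi>\<in>?X. norm (\<chi> g - 1) < min \<epsilon>\<^sub>1 \<epsilon>\<^sub>2}"
    using 1 2 by (intro bohr_nbhd_characters) auto
  moreover have "{g. \<forall>\<chi>\<in>?X. norm (\<chi> g - 1) < min \<epsilon>\<^sub>1 \<epsilon>\<^sub>2} \<subseteq> B\<^sub>1 \<inter> B\<^sub>2"
    unfolding 1(3) 2(3) by auto
  ultimately show ?thesis by (rule that)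
qed

lemma finite_index_multiple:
  assumes H: "add_subgroup H" and fin: "finite_index H"
  obtains n where "n > 0" "zmult (int n) g \<in> H"
proof -
  let ?coset = "\<lambda>j::nat. (+) (zmult (int j) g) ` H"
  have "range ?coset \<subseteq> (\<lambda>g. (\<lambda>h. g + h) ` H) ` UNIV" by auto
  then have "finite (range ?coset)"
    using fin unfolding finite_index_def by (rule finite_subset)
  then have "\<not> inj ?coset"
    using finite_imageD infinite_UNIV_nat by blast
  then obtain i j where "i \<noteq> j" "?coset i = ?coset j"
    unfolding inj_def by blast
  then obtain i j where "i < j" "?coset i = ?coset j"
    by (metis linorder_neqE_nat)
  then have "zmult (int i) g \<in> ?coset j"
    using add_subgroup_0[OF H] by (metis add.right_neutral imageI)
  then obtain h where "h \<in> H" "zmult (int i) g = zmult (int j) g + h" by auto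
  then have "zmult (int (j - i)) g \<in> H"
    using \<open>i < j\<close> add_subgroup_minus[OF H] by (simp add: of_nat_diff zmult_diff_left)
  then show ?thesis
    using that[of "j - i"] \<open>i < j\<close> by (simp add: of_nat_diff)
qed

lemma finite_index_contains_bohr_nbhd:
  assumes H: "add_subgroup H" and fin: "finite_index H"
  obtains B where "bohr_nbhd B" "B \<subseteq> H"
proof -
  define \<xi> where "\<xi> g = (SOME \<xi>. character \<xi> \<and> (\<forall>h\<in>H. \<xi> h = 1) \<and> \<xi> g \<noteq> 1)" for g
  have \<xi>: "character (\<xi> g) \<and> (\<forall>h\<in>H. \<xi> g h = 1) \<and> \<xi> g g \<noteq> 1" if "g \<notin> H" for g
  proof -
    obtain n where n: "n > 0" "zmult (int n) g \<in> H"
      using finite_index_multiple[OF H fin] .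
    have "\<exists>\<xi>. character \<xi> \<and> (\<forall>h\<in>H. \<xi> h = 1) \<and> \<xi> g \<noteq> 1"
      by (rule separating_character[OF H \<open>g \<notin> H\<close> n]) blast
    then show ?thesis
      unfolding \<xi>_def by (rule someI_ex)
  qed
  define C where "C = range (\<lambda>g. (+) g ` H) - {H}"
  define rep where "rep X = (SOME g. (+) g ` H = X)" for X
  have rep: "(+) (rep X) ` H = X" "rep X \<notin> H" if X: "X \<in> C" for X
  proof -
    obtain g where "(+) g ` H = X"
      using X unfolding C_def by blast
    then show "(+) (rep X) ` H = X"
      unfolding rep_def by (rule someI)
    moreover have "X \<noteq> H"
      using X unfolding C_def by blast
    ultimately show "rep X \<notin> H"
      using coset_of_member[OF H] by metis
  qed
  have "finite C"
    using fin unfolding finite_index_def C_def by simp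
  define \<delta> where "\<delta> = Min (insert 1 ((\<lambda>X. norm (\<xi> (rep X) (rep X) - 1)) ` C))"
  have "\<delta> > 0"
    unfolding \<delta>_def using \<open>finite C\<close> \<xi> rep(2) by (subst Min_gr_iff) auto
  define B where "B = {x. \<forall>\<chi>\<in>(\<lambda>X. \<xi> (rep X)) ` C. norm (\<chi> x - 1) < \<delta>}"
  have "bohr_nbhd B"
    unfolding B_def using \<open>finite C\<close> \<xi> rep(2) \<open>\<delta> > 0\<close> by (intro bohr_nbhd_characters) auto
  moreover have "B \<subseteq> H"
  proof
    fix x assume x: "x \<in> B"
    show "x \<in> H"
    proof (rule ccontr)
      assume "x \<notin> H"
      have "x \<in> (+) x ` H"
        using add_subgroup_0[OF H] by force
      then have X: "(+) x ` H \<in> C"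
        using \<open>x \<notin> H\<close> unfolding C_def by auto
      define g where "g = rep ((+) x ` H)"
      have "x \<in> (+) g ` H"
        using rep(1)[OF X] \<open>x \<in> (+) x ` H\<close> by (simp add: g_def)
      then obtain h where "h \<in> H" "x = g + h" by blast
      then have "\<xi> g x = \<xi> g g"
        using \<xi>[OF rep(2)[OF X, folded g_def]] by (simp add: character_add)
      moreover have "norm (\<xi> g x - 1) < \<delta>"
        using x X unfolding B_def g_def by blast
      moreover have "\<delta> \<le> norm (\<xi> g g - 1)"
        unfolding \<delta>_def g_def using \<open>finite C\<close> X by (intro Min_le) auto
      ultimately show False
        by simp
    qed
  qed
  ultimately show ?thesis by (rule that)
qed

definition transversal :: "'a::ab_group_add set \<Rightarrow> 'a set \<Rightarrow> 'a set \<Rightarrow> bool" where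
  "transversal K N R \<longleftrightarrow> R \<subseteq> K \<and> (\<forall>k\<in>K. \<exists>!r\<in>R. k - r \<in> N)"

lemma finite_transversal_exists:
  assumes N: "add_subgroup N" and fin: "finite ((\<lambda>k. (+) k ` N) ` K)"
  obtains R where "transversal K N R" "finite R"
proof
  define rep where "rep C = (SOME k. k \<in> K \<and> (+) k ` N = C)" for C
  have rep: "rep ((+) k ` N) \<in> K" "(+) (rep ((+) k ` N)) ` N = (+) k ` N" if "k \<in> K" for k
    using someI[of "\<lambda>k'. k' \<in> K \<and> (+) k' ` N = (+) k ` N" k] that unfolding rep_def by auto
  define R where "R = (\<lambda>k. rep ((+) k ` N)) ` K"
  have "R = rep ` (\<lambda>k. (+) k ` N) ` K"
    unfolding R_def by (simp add: image_image)
  then show "finite R"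
    using fin by simp
  have rep_diff: "k - rep ((+) k ` N) \<in> N" if "k \<in> K" for k
    using rep(2)[OF that] coset_eq_iff[OF N, of k "rep ((+) k ` N)"] by simp
  show "transversal K N R"
    unfolding transversal_def
  proof (intro conjI ballI)
    show "R \<subseteq> K" using rep(1) unfolding R_def by blast
    fix k assume "k \<in> K"
    show "\<exists>!r\<in>R. k - r \<in> N"
    proof (rule ex_ex1I)
      show "\<exists>r. r \<in> R \<and> k - r \<in> N"
        using \<open>k \<in> K\<close> rep_diff unfolding R_def by blast
      fix r r' assume "r \<in> R \<and> k - r \<in> N" "r' \<in> R \<and> k - r' \<in> N"
      then obtain l l' where l: "l \<in> K" "r = rep ((+) l ` N)" "l' \<in> K" "r' = rep ((+) l' ` N)"
        and "k - r \<in> N" "k - r' \<in> N"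
        unfolding R_def by blast
      have "r - r' = (k - r') - (k - r)" by simp
      also have "\<dots> \<in> N"
        using add_subgroup_diff[OF N \<open>k - r' \<in> N\<close> \<open>k - r \<in> N\<close>] .
      finally have "(+) r ` N = (+) r' ` N"
        using coset_eq_iff[OF N] by blast
      then have "(+) l ` N = (+) l' ` N"
        using rep(2)[OF l(1)] rep(2)[OF l(3)] l(2,4) by simp
      then show "r = r'"
        using l(2,4) by simp
    qed
  qed
qed

lemma transversal_translate:
  assumes K: "add_subgroup K" and N: "add_subgroup N" and R: "transversal K N R" "finite R"
    and k\<^sub>0: "k\<^sub>0 \<in> K"
  obtains \<sigma> where "bij_betw \<sigma> R R" "\<And>k. k \<in> R \<Longrightarrow> \<sigma> k - (k\<^sub>0 + k) \<in> N"
proof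
  have RK: "R \<subseteq> K" and unique: "\<And>k. k \<in> K \<Longrightarrow> \<exists>!r\<in>R. k - r \<in> N"
    using R(1) unfolding transversal_def by auto
  define \<sigma> where "\<sigma> k = (THE r. r \<in> R \<and> (k\<^sub>0 + k) - r \<in> N)" for k
  have \<sigma>: "\<sigma> k \<in> R" "(k\<^sub>0 + k) - \<sigma> k \<in> N" if "k \<in> R" for k
  proof -
    have "k\<^sub>0 + k \<in> K" using k\<^sub>0 RK that add_subgroup_add[OF K] by blast
    from unique[OF this] have "\<sigma> k \<in> R \<and> (k\<^sub>0 + k) - \<sigma> k \<in> N"
      unfolding \<sigma>_def by (rule theI')
    then show "\<sigma> k \<in> R" "(k\<^sub>0 + k) - \<sigma> k \<in> N" by auto
  qed
  show "\<sigma> k - (k\<^sub>0 + k) \<in> N" if "k \<in> R" for k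
    using add_subgroup_minus[OF N \<sigma>(2)[OF that]] by simp
  have "inj_on \<sigma> R"
  proof (rule inj_onI)
    fix a b assume ab: "a \<in> R" "b \<in> R" "\<sigma> a = \<sigma> b"
    have "a - b = ((k\<^sub>0 + a) - \<sigma> a) - ((k\<^sub>0 + b) - \<sigma> b)"
      using ab(3) by simp
    also have "\<dots> \<in> N"
      using add_subgroup_diff[OF N \<sigma>(2)[OF ab(1)] \<sigma>(2)[OF ab(2)]] .
    finally have "a - b \<in> N" .
    moreover have "a - a \<in> N"
      using add_subgroup_0[OF N] by simp
    moreover have "\<exists>!r. r \<in> R \<and> a - r \<in> N"
      using unique RK ab(1) by blast
    ultimately show "a = b"
      using ab(1,2) by blast
  qed
  moreover have "\<sigma> ` R \<subseteq> R"
    using \<sigma>(1) by blast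
  ultimately show "bij_betw \<sigma> R R"
    unfolding bij_betw_def using endo_inj_surj[OF R(2)] by blast
qed

lemma transversal_translate_invariant:
  assumes "add_subgroup K" "add_subgroup N" "transversal K N R" "finite R" "k\<^sub>0 \<in> K"
    and invariant: "\<And>x n. n \<in> N \<Longrightarrow> F (x + n) = F x"
  shows "(\<Sum>k\<in>R. F (k\<^sub>0 + k)) = (\<Sum>k\<in>R. F k)" and "(\<Prod>k\<in>R. F (k\<^sub>0 + k)) = (\<Prod>k\<in>R. F k)"
proof -
  obtain \<sigma> where \<sigma>: "bij_betw \<sigma> R R" "\<And>k. k \<in> R \<Longrightarrow> \<sigma> k - (k\<^sub>0 + k) \<in> N"
    using transversal_translate[OF assms(1-5)] by blast
  have F\<sigma>: "F (\<sigma> k) = F (k\<^sub>0 + k)" if "k \<in> R" for k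
    using invariant[OF \<sigma>(2)[OF that], of "k\<^sub>0 + k"] by simp
  show "(\<Sum>k\<in>R. F (k\<^sub>0 + k)) = (\<Sum>k\<in>R. F k)"
    using sum.reindex_bij_betw[OF \<sigma>(1), of F] F\<sigma> by simp
  show "(\<Prod>k\<in>R. F (k\<^sub>0 + k)) = (\<Prod>k\<in>R. F k)"
    using prod.reindex_bij_betw[OF \<sigma>(1), of F] F\<sigma> by simp
qed

lemma bohr_nbhd_UNIV: "bohr_nbhd UNIV"
  unfolding bohr_nbhd_def by (rule exI[of _ 0], rule exI, rule exI[of _ 1]) auto

inductive trig_poly :: "('a \<Rightarrow> complex) set \<Rightarrow> ('a \<Rightarrow> complex) \<Rightarrow> bool" for \<Gamma> where
  monomial: "\<theta> \<in> \<Gamma> \<Longrightarrow> trig_poly \<Gamma> (\<lambda>x. a * \<theta> x)"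
| zero: "trig_poly \<Gamma> (\<lambda>x. 0)"
| add: "trig_poly \<Gamma> f \<Longrightarrow> trig_poly \<Gamma> g \<Longrightarrow> trig_poly \<Gamma> (\<lambda>x. f x + g x)"

lemma trig_poly_cong: "trig_poly \<Gamma> f \<Longrightarrow> (\<And>x. f x = g x) \<Longrightarrow> trig_poly \<Gamma> g"
  by (metis ext)

lemma trig_poly_mult:
  assumes closed: "\<And>\<theta> \<eta>. \<theta> \<in> \<Gamma> \<Longrightarrow> \<eta> \<in> \<Gamma> \<Longrightarrow> (\<lambda>x. \<theta> x * \<eta> x) \<in> \<Gamma>"
  shows "trig_poly \<Gamma> f \<Longrightarrow> trig_poly \<Gamma> g \<Longrightarrow> trig_poly \<Gamma> (\<lambda>x. f x * g x)"
proof (induction f rule: trig_poly.induct)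
  case (monomial \<theta> a)
  from monomial.prems show ?case
  proof (induction g rule: trig_poly.induct)
    case (monomial \<eta> b)
    have "trig_poly \<Gamma> (\<lambda>x. (a * b) * (\<theta> x * \<eta> x))"
      using closed[OF \<open>\<theta> \<in> \<Gamma>\<close> \<open>\<eta> \<in> \<Gamma>\<close>] by (rule trig_poly.monomial)
    then show ?case by (rule trig_poly_cong) simp
  next
    case zero
    show ?case using trig_poly.zero by simp
  next
    case (add g\<^sub>1 g\<^sub>2)
    have "trig_poly \<Gamma> (\<lambda>x. a * \<theta> x * g\<^sub>1 x + a * \<theta> x * g\<^sub>2 x)"
      using add.IH by (rule trig_poly.add)
    then show ?case
      by (rule trig_poly_cong) (simp add: distrib_left)
  qed
next
  case zero
  show ?case using trig_poly.zero by simp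
next
  case (add f\<^sub>1 f\<^sub>2)
  have "trig_poly \<Gamma> (\<lambda>x. f\<^sub>1 x * g x + f\<^sub>2 x * g x)"
    using add.IH(1)[OF add.prems] add.IH(2)[OF add.prems] by (rule trig_poly.add)
  then show ?case
    by (rule trig_poly_cong) (simp add: distrib_right)
qed

lemma trig_poly_sum:
  "finite I \<Longrightarrow> (\<And>i. i \<in> I \<Longrightarrow> trig_poly \<Gamma> (f i)) \<Longrightarrow> trig_poly \<Gamma> (\<lambda>x. \<Sum>i\<in>I. f i x)"
proof (induction I rule: finite_induct)
  case empty
  show ?case using trig_poly.zero by simp
next
  case (insert i I)
  have "trig_poly \<Gamma> (\<lambda>x. f i x + (\<Sum>i\<in>I. f i x))"
    using insert.prems[of i] insert.IH insert.prems by (intro trig_poly.add) simp_all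
  then show ?case
    using insert.hyps by simp
qed

lemma trig_poly_prod:
  assumes closed: "\<And>\<theta> \<eta>. \<theta> \<in> \<Gamma> \<Longrightarrow> \<eta> \<in> \<Gamma> \<Longrightarrow> (\<lambda>x. \<theta> x * \<eta> x) \<in> \<Gamma>"
    and one: "(\<lambda>_. 1) \<in> \<Gamma>"
  shows "finite I \<Longrightarrow> (\<And>i. i \<in> I \<Longrightarrow> trig_poly \<Gamma> (f i)) \<Longrightarrow> trig_poly \<Gamma> (\<lambda>x. \<Prod>i\<in>I. f i x)"
proof (induction I rule: finite_induct)
  case empty
  show ?case using trig_poly.monomial[OF one, of 1] by simp
next
  case (insert i I)
  have "trig_poly \<Gamma> (\<lambda>x. f i x * (\<Prod>i\<in>I. f i x))"
    using insert.prems[of i] insert.IH insert.prems by (intro trig_poly_mult[OF closed]) simp_all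
  then show ?case
    using insert.hyps by simp
qed

lemma trig_poly_average:
  assumes R: "finite R" "R \<noteq> {}" and characters: "\<And>\<theta>. \<theta> \<in> \<Gamma> \<Longrightarrow> character \<theta>"
    and orthogonal: "\<And>\<theta>. \<theta> \<in> \<Gamma> \<Longrightarrow> (\<Sum>k\<in>R. \<theta> k) = (if \<theta> \<in> \<Gamma>' then of_nat (card R) else 0)"
  shows "trig_poly \<Gamma> f \<Longrightarrow> trig_poly \<Gamma>' (\<lambda>x. (\<Sum>k\<in>R. f (x + k)) / of_nat (card R))"
proof (induction f rule: trig_poly.induct)
  case (monomial \<theta> a)
  have "card R \<noteq> 0"
    using R by simp
  have "(\<Sum>k\<in>R. a * \<theta> (x + k)) = a * \<theta> x * (\<Sum>k\<in>R. \<theta> k)" for x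
    by (simp add: character_add[OF characters[OF monomial]] sum_distrib_left mult.assoc)
  then have average: "(if \<theta> \<in> \<Gamma>' then a * \<theta> x else 0) = (\<Sum>k\<in>R. a * \<theta> (x + k)) / of_nat (card R)"
    for x using \<open>card R \<noteq> 0\<close> by (simp add: orthogonal[OF monomial])
  have "trig_poly \<Gamma>' (\<lambda>x. if \<theta> \<in> \<Gamma>' then a * \<theta> x else 0)"
    by (cases "\<theta> \<in> \<Gamma>'") (simp_all add: trig_poly.monomial trig_poly.zero)
  then show ?case
    by (rule trig_poly_cong) (rule average)
next
  case zero
  show ?case using trig_poly.zero by simp
next
  case (add f g)
  have "trig_poly \<Gamma>' (\<lambda>x. (\<Sum>k\<in>R. f (x + k)) / of_nat (card R) + (\<Sum>k\<in>R. g (x + k)) / of_nat (card R))"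
    using add.IH by (rule trig_poly.add)
  then show ?case
    by (rule trig_poly_cong) (simp only: sum.distrib add_divide_distrib)
qed

lemma trig_poly_bohr_continuous:
  assumes p0: "p 0 = 0"
    and factor: "\<And>\<theta>. \<theta> \<in> \<Gamma> \<Longrightarrow> \<exists>\<psi>. character \<psi> \<and> (\<forall>x. \<psi> (p x) = \<theta> x)"
  shows "trig_poly \<Gamma> f \<Longrightarrow> \<eta> > 0 \<Longrightarrow>
    \<exists>B. bohr_nbhd B \<and> (\<forall>x. p x \<in> B \<longrightarrow> norm (f x - f 0) < \<eta>)"
proof (induction f arbitrary: \<eta> rule: trig_poly.induct)
  case (monomial \<theta> a)
  obtain \<psi> where \<psi>: "character \<psi>" "\<And>x. \<psi> (p x) = \<theta> x"
    using factor[OF monomial(1)] by blast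
  define \<delta> where "\<delta> = \<eta> / (norm a + 1)"
  have "norm a + 1 > 0"
    by (simp add: add_nonneg_pos)
  then have "\<delta> > 0"
    using monomial(2) by (simp add: \<delta>_def)
  let ?B = "{g. \<forall>\<chi>\<in>{\<psi>}. norm (\<chi> g - 1) < \<delta>}"
  have "norm (a * \<theta> x - a * \<theta> 0) < \<eta>" if "p x \<in> ?B" for x
  proof -
    have "a * \<theta> x - a * \<theta> 0 = a * (\<psi> (p x) - 1)"
      using \<psi>(2)[of x] \<psi>(2)[of 0] p0 character_0[OF \<psi>(1)] by (simp add: right_diff_distrib)
    then have "norm (a * \<theta> x - a * \<theta> 0) = norm a * norm (\<psi> (p x) - 1)"
      by (simp add: norm_mult)
    also have "\<dots> \<le> norm a * \<delta>"
      using that by (simp add: mult_left_mono)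
    also have "\<dots> < \<eta>"
      using monomial(2) \<open>norm a + 1 > 0\<close> by (simp add: \<delta>_def field_simps)
    finally show ?thesis .
  qed
  moreover have "bohr_nbhd ?B"
    using \<psi>(1) \<open>\<delta> > 0\<close> by (intro bohr_nbhd_characters) auto
  ultimately show ?case by blast
next
  case zero
  show ?case
    using bohr_nbhd_UNIV zero by auto
next
  case (add f g)
  obtain B\<^sub>f where B\<^sub>f: "bohr_nbhd B\<^sub>f" "\<forall>x. p x \<in> B\<^sub>f \<longrightarrow> norm (f x - f 0) < \<eta> / 2"
    using add.IH(1)[of "\<eta> / 2"] add.prems by auto
  obtain B\<^sub>g where B\<^sub>g: "bohr_nbhd B\<^sub>g" "\<forall>x. p x \<in> B\<^sub>g \<longrightarrow> norm (g x - g 0) < \<eta> / 2"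
    using add.IH(2)[of "\<eta> / 2"] add.prems by auto
  obtain B where B: "bohr_nbhd B" "B \<subseteq> B\<^sub>f \<inter> B\<^sub>g"
    using bohr_nbhd_Int[OF B\<^sub>f(1) B\<^sub>g(1)] by blast
  have "norm (f x + g x - (f 0 + g 0)) < \<eta>" if "p x \<in> B" for x
  proof -
    have "norm (f x + g x - (f 0 + g 0)) \<le> norm (f x - f 0) + norm (g x - g 0)"
      by (rule norm_diff_triangle_ineq)
    moreover have "norm (f x - f 0) < \<eta> / 2" "norm (g x - g 0) < \<eta> / 2"
      using that B(2) B\<^sub>f(2) B\<^sub>g(2) by blast+
    ultimately show ?thesis by linarith
  qed
  then show ?case
    using B(1) by auto
qed

lemma character_minus: "character \<chi> \<Longrightarrow> \<chi> (- x) = cnj (\<chi> x)"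
  by (simp add: character_iff_partial_character partial_character_minus)

lemma character_cnj: "character \<chi> \<Longrightarrow> character (\<lambda>x. cnj (\<chi> x))"
  by (simp add: character_def)

lemma character_mult: "character \<theta> \<Longrightarrow> character \<eta> \<Longrightarrow> character (\<lambda>x. \<theta> x * \<eta> x)"
  by (simp add: character_def norm_mult mult_ac)

lemma character_diff: "character \<chi> \<Longrightarrow> \<chi> (x - y) = \<chi> x * cnj (\<chi> y)"
  by (simp add: character_iff_partial_character partial_character_diff)

lemma character_one: "character (\<lambda>_. 1)"
  by (simp add: character_def)

lemma character_dist_sq:
  assumes "character \<chi>"
  shows "complex_of_real ((norm (\<chi> x - 1))\<^sup>2) = 2 - \<chi> x - cnj (\<chi> x)"
proof -
  have "complex_of_real ((norm (\<chi> x - 1))\<^sup>2) = (\<chi> x - 1) * cnj (\<chi> x - 1)"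
    by (rule complex_norm_square)
  also have "\<dots> = \<chi> x * cnj (\<chi> x) + 1 - \<chi> x - cnj (\<chi> x)"
    by (simp add: algebra_simps)
  finally show ?thesis
    using unit_mult_cnj[OF character_norm[OF assms]] by simp
qed

lemma add_subgroup_joint_kernel:
  fixes r :: nat
  assumes "\<And>i. i < r \<Longrightarrow> character (\<chi>s i)"
  shows "add_subgroup {x. \<forall>i<r. \<chi>s i x = 1}"
  using assms by (simp add: add_subgroup_def character_0 character_add character_minus)

lemma power_int_eq_1_imp_power_eq_1:
  fixes z :: "'a::field"
  assumes "z powi c = 1"
  shows "z ^ nat \<bar>c\<bar> = 1"
  using assms by (cases "c \<ge> 0") (simp_all add: power_int_def power_inverse)

lemma finite_cosets_joint_kernel:
  fixes r :: nat
  assumes chars: "\<And>i. i < r \<Longrightarrow> character (\<chi>s i)" and "n \<ge> 1"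
    and roots: "\<And>i k. i < r \<Longrightarrow> k \<in> K \<Longrightarrow> \<chi>s i k ^ n = 1"
  shows "finite ((\<lambda>k. (+) k ` {x. \<forall>i<r. \<chi>s i x = 1}) ` K)"
proof -
  let ?N = "{x. \<forall>i<r. \<chi>s i x = 1}"
  define v where "v k = map (\<lambda>i. \<chi>s i k) [0..<r]" for k
  have "v ` K \<subseteq> {xs. set xs \<subseteq> {z. z ^ n = 1} \<and> length xs = r}"
    using roots by (auto simp: v_def)
  then have "finite (v ` K)"
    using finite_lists_length_eq[OF finite_roots_unity[OF \<open>n \<ge> 1\<close>]] by (rule finite_subset)
  moreover have same_coset: "(+) a ` ?N = (+) b ` ?N" if "v a = v b" for a b
  proof -
    have "\<chi>s i (a - b) = 1" if "i < r" for i
    proof -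
      have "\<chi>s i a = \<chi>s i b"
        using \<open>v a = v b\<close> that unfolding v_def map_eq_conv by simp
      then show ?thesis
        using character_diff[OF chars[OF that]] unit_mult_cnj[OF character_norm[OF chars[OF that]]]
        by simp
    qed
    moreover have "add_subgroup ?N"
      using chars by (rule add_subgroup_joint_kernel)
    ultimately show ?thesis
      by (simp add: coset_eq_iff)
  qed
  have "(+) k ` ?N = (+) (inv_into K v (v k)) ` ?N" if "k \<in> K" for k
    using that by (intro same_coset) (simp add: f_inv_into_f)
  then have "(\<lambda>k. (+) k ` ?N) ` K = (\<lambda>w. (+) (inv_into K v w) ` ?N) ` v ` K"
    unfolding image_image by (rule image_cong[OF refl])
  ultimately show ?thesis
    by simp
qed

lemma character_sum_transversal:
  assumes K: "add_subgroup K" and N: "add_subgroup N" and R: "transversal K N R" "finite R"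
    and \<theta>: "character \<theta>" "\<And>n. n \<in> N \<Longrightarrow> \<theta> n = 1"
  shows "(\<Sum>k\<in>R. \<theta> k) = (if \<forall>k\<in>K. \<theta> k = 1 then of_nat (card R) else 0)"
proof (cases "\<forall>k\<in>K. \<theta> k = 1")
  case True
  then show ?thesis
    using R(1) unfolding transversal_def by (simp add: subset_iff)
next
  case False
  then obtain k\<^sub>0 where "k\<^sub>0 \<in> K" "\<theta> k\<^sub>0 \<noteq> 1" by blast
  have "(\<Sum>k\<in>R. \<theta> k) = (\<Sum>k\<in>R. \<theta> (k\<^sub>0 + k))"
    using transversal_translate_invariant(1)[OF K N R \<open>k\<^sub>0 \<in> K\<close>, of \<theta>] \<theta>
    by (simp add: character_add)
  also have "\<dots> = \<theta> k\<^sub>0 * (\<Sum>k\<in>R. \<theta> k)"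
    by (simp add: character_add[OF \<theta>(1)] sum_distrib_left)
  finally have "(\<theta> k\<^sub>0 - 1) * (\<Sum>k\<in>R. \<theta> k) = 0"
    by (simp add: algebra_simps)
  then show ?thesis
    using \<open>\<theta> k\<^sub>0 \<noteq> 1\<close> by (simp add: if_not_P[OF False])
qed

lemma prod_less_power_imp_factor_less:
  fixes f :: "'b \<Rightarrow> real"
  assumes "finite R" "(\<Prod>k\<in>R. f k) < e ^ card R" "e \<ge> 0"
  shows "\<exists>k\<in>R. f k < e"
proof (rule ccontr)
  assume "\<not> (\<exists>k\<in>R. f k < e)"
  then have "(\<Prod>k\<in>R. e) \<le> (\<Prod>k\<in>R. f k)"
    using \<open>e \<ge> 0\<close> by (intro prod_mono) auto
  then show False
    using assms by simp
qed

lemma bohr_nbhd_meets_kernel_coset: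
  fixes \<chi>s :: "nat \<Rightarrow> 'a::ab_group_add \<Rightarrow> complex"
  assumes chars: "\<And>i. i < r \<Longrightarrow> character (\<chi>s i)" and "\<epsilon> > 0" and "c \<noteq> 0"
  shows "\<exists>B'. bohr_nbhd B' \<and>
    (\<forall>h. zmult c h \<in> B' \<longrightarrow> (\<exists>k. zmult c k = 0 \<and> (\<forall>i<r. norm (\<chi>s i (h + k) - 1) < \<epsilon>)))"
proof -
  define K where "K = {k::'a. zmult c k = 0}"
  define N where "N = {x. \<forall>i<r. \<chi>s i x = 1}"
  have K: "add_subgroup K"
    unfolding K_def by (rule add_subgroup_kernel[OF additive_zmult])
  have N: "add_subgroup N"
    unfolding N_def using chars by (rule add_subgroup_joint_kernel)
  have roots: "\<chi>s i k ^ nat \<bar>c\<bar> = 1" if "i < r" "k \<in> K" for i k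
    using that character_zmult[OF chars[OF that(1)], of c k] character_0[OF chars[OF that(1)]]
    by (intro power_int_eq_1_imp_power_eq_1) (simp add: K_def)
  have "finite ((\<lambda>k. (+) k ` N) ` K)"
    unfolding N_def using chars \<open>c \<noteq> 0\<close> roots
    by (intro finite_cosets_joint_kernel[where n = "nat \<bar>c\<bar>"]) auto
  then obtain R where R: "transversal K N R" "finite R"
    using finite_transversal_exists[OF N] by blast
  have "R \<subseteq> K" "R \<noteq> {}"
    using R(1) add_subgroup_0[OF K] unfolding transversal_def by auto
  define \<Gamma> where "\<Gamma> = {\<theta>. character \<theta> \<and> (\<forall>n\<in>N. \<theta> n = 1)}"
  define \<Gamma>' where "\<Gamma>' = {\<theta>. character \<theta> \<and> (\<forall>k\<in>K. \<theta> k = 1)}"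
  define D where "D x = (\<Sum>i<r. 2 - \<chi>s i x - cnj (\<chi>s i x))" for x
  define P where "P x = (\<Prod>k\<in>R. D (x + k))" for x
  have D_invariant: "D (x + n) = D x" if "n \<in> N" for x n
    using that chars by (simp add: D_def N_def character_add)
  have "trig_poly \<Gamma> (\<lambda>x. D (x + k))" for k
  proof -
    have "trig_poly \<Gamma> (\<lambda>x. \<Sum>i<r. 2 * 1 + ((- \<chi>s i k) * \<chi>s i x + (- cnj (\<chi>s i k)) * cnj (\<chi>s i x)))"
      using chars by (intro trig_poly_sum trig_poly.add trig_poly.monomial)
        (auto simp: \<Gamma>_def N_def character_one character_cnj)
    then show ?thesis
      by (rule trig_poly_cong) (simp add: D_def chars character_add algebra_simps)
  qed
  then have "trig_poly \<Gamma> P"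
    unfolding P_def using \<open>finite R\<close>
    by (intro trig_poly_prod) (auto simp: \<Gamma>_def character_mult character_one)
  moreover have "(\<Sum>k\<in>R. \<theta> k) = (if \<theta> \<in> \<Gamma>' then of_nat (card R) else 0)" if "\<theta> \<in> \<Gamma>" for \<theta>
    using that character_sum_transversal[OF K N R, of \<theta>] unfolding \<Gamma>_def \<Gamma>'_def by simp
  ultimately have "trig_poly \<Gamma>' (\<lambda>x. (\<Sum>k\<in>R. P (x + k)) / of_nat (card R))"
    using trig_poly_average[OF \<open>finite R\<close> \<open>R \<noteq> {}\<close>, of \<Gamma> \<Gamma>' P] by (simp add: \<Gamma>_def)
  moreover have "P (x + k\<^sub>0) = P x" if "k\<^sub>0 \<in> K" for x k\<^sub>0
  proof -
    have "D (x + (y + n)) = D (x + y)" if "n \<in> N" for y n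
      using D_invariant[OF that, of "x + y"] by (simp add: add.assoc)
    then show ?thesis
      using transversal_translate_invariant(2)[OF K N R that, of "\<lambda>k. D (x + k)"]
      by (simp add: P_def add.assoc)
  qed
  then have "(\<Sum>k\<in>R. P (x + k)) / of_nat (card R) = P x" for x
    using \<open>R \<subseteq> K\<close> \<open>R \<noteq> {}\<close> \<open>finite R\<close> by (simp add: subset_iff)
  ultimately have "trig_poly \<Gamma>' P"
    by simp
  moreover have "\<exists>\<psi>. character \<psi> \<and> (\<forall>x. \<psi> (zmult c x) = \<theta> x)" if "\<theta> \<in> \<Gamma>'" for \<theta>
    using that character_factor[OF additive_zmult] unfolding \<Gamma>'_def K_def by blast
  moreover have "(\<epsilon>\<^sup>2) ^ card R > 0"
    using \<open>\<epsilon> > 0\<close> by simp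
  ultimately have "\<exists>B'. bohr_nbhd B' \<and> (\<forall>h. zmult c h \<in> B' \<longrightarrow> norm (P h - P 0) < (\<epsilon>\<^sup>2) ^ card R)"
    by (intro trig_poly_bohr_continuous[of "zmult c" \<Gamma>']) simp_all
  then obtain B' where "bohr_nbhd B'"
    and B': "\<And>h. zmult c h \<in> B' \<Longrightarrow> norm (P h - P 0) < (\<epsilon>\<^sup>2) ^ card R"
    by blast
  have D_real: "D x = of_real (\<Sum>i<r. (norm (\<chi>s i x - 1))\<^sup>2)" for x
    unfolding D_def of_real_sum
    by (rule sum.cong[OF refl], rule character_dist_sq[symmetric]) (simp add: chars)
  have "P 0 = 0"
  proof -
    obtain k where "k \<in> R" "0 - k \<in> N"
      using R(1) add_subgroup_0[OF K] unfolding transversal_def by blast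
    then have "D k = D 0"
      using D_invariant[of "- k" k] by simp
    also have "D 0 = 0"
      using chars by (simp add: D_def character_0)
    finally show ?thesis
      unfolding P_def using \<open>finite R\<close> \<open>k \<in> R\<close> by (auto simp: prod_zero_iff)
  qed
  have "\<exists>k. zmult c k = 0 \<and> (\<forall>i<r. norm (\<chi>s i (h + k) - 1) < \<epsilon>)" if "zmult c h \<in> B'" for h
  proof -
    define d where "d k = (\<Sum>i<r. (norm (\<chi>s i (h + k) - 1))\<^sup>2)" for k
    have "P h = of_real (\<Prod>k\<in>R. d k)"
      unfolding P_def D_real d_def of_real_prod ..
    moreover have "(\<Prod>k\<in>R. d k) \<ge> 0"
      unfolding d_def by (intro prod_nonneg sum_nonneg) simp
    ultimately have "norm (P h) = (\<Prod>k\<in>R. d k)"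
      by (simp only: norm_of_real abs_of_nonneg)
    then have "(\<Prod>k\<in>R. d k) < (\<epsilon>\<^sup>2) ^ card R"
      using B'[OF that] \<open>P 0 = 0\<close> by simp
    then obtain k where "k \<in> R" "d k < \<epsilon>\<^sup>2"
      using prod_less_power_imp_factor_less[OF \<open>finite R\<close>, of d "\<epsilon>\<^sup>2"] by auto
    then have "(norm (\<chi>s i (h + k) - 1))\<^sup>2 < \<epsilon>\<^sup>2" if "i < r" for i
      using that member_le_sum[of i "{..<r}" "\<lambda>i. (norm (\<chi>s i (h + k) - 1))\<^sup>2"]
      by (simp add: d_def)
    then have "\<forall>i<r. norm (\<chi>s i (h + k) - 1) < \<epsilon>"
      using power2_less_imp_less \<open>\<epsilon> > 0\<close> by fastforce
    moreover have "zmult c k = 0"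
      using \<open>k \<in> R\<close> \<open>R \<subseteq> K\<close> by (auto simp: K_def)
    ultimately show ?thesis by blast
  qed
  with \<open>bohr_nbhd B'\<close> show ?thesis
    by blast
qed

theorem lemma1p6:
  fixes B :: "'a::{ab_group_add, countable} set" and c :: int
  assumes "bohr_nbhd B"
    and "finite_index (range (zmult c :: 'a \<Rightarrow> 'a))"
  shows "\<exists>B'. bohr_nbhd B' \<and> B' \<subseteq> zmult c ` B"
proof -
  obtain r :: nat and \<chi>s \<epsilon> where "\<epsilon> > 0" and chars: "\<And>i. i < r \<Longrightarrow> character (\<chi>s i)"
    and B: "B = {g. \<forall>i<r. norm (\<chi>s i g - 1) < \<epsilon>}"
    using assms(1) by (rule bohr_nbhdE) blast
  obtain B\<^sub>1 :: "'a set" where "bohr_nbhd B\<^sub>1" and B\<^sub>1: "B\<^sub>1 \<subseteq> range (zmult c)"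
    using finite_index_contains_bohr_nbhd[OF add_subgroup_range[OF additive_zmult] assms(2)] by blast
  show ?thesis
  proof (cases "c = 0")
    case True
    have "0 \<in> B"
      using chars \<open>\<epsilon> > 0\<close> by (simp add: B character_0)
    have "g \<in> zmult c ` B" if g: "g \<in> B\<^sub>1" for g
    proof -
      obtain h where "g = zmult c h"
        using g B\<^sub>1 by blast
      then have "g = zmult c 0"
        using True by simp
      then show ?thesis
        using \<open>0 \<in> B\<close> by (rule image_eqI)
    qed
    then have "B\<^sub>1 \<subseteq> zmult c ` B" ..
    then show ?thesis
      using \<open>bohr_nbhd B\<^sub>1\<close> by blast
  next
    case False
    obtain B\<^sub>2 where "bohr_nbhd B\<^sub>2" and B\<^sub>2: "\<forall>h. zmult c h \<in> B\<^sub>2 \<longrightarrow>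
        (\<exists>k. zmult c k = 0 \<and> (\<forall>i<r. norm (\<chi>s i (h + k) - 1) < \<epsilon>))"
      using bohr_nbhd_meets_kernel_coset[where \<chi>s = \<chi>s and r = r, OF chars \<open>\<epsilon> > 0\<close> False] by blast
    obtain B' where "bohr_nbhd B'" and B': "B' \<subseteq> B\<^sub>1 \<inter> B\<^sub>2"
      using bohr_nbhd_Int[OF \<open>bohr_nbhd B\<^sub>1\<close> \<open>bohr_nbhd B\<^sub>2\<close>] .
    have "g \<in> zmult c ` B" if g: "g \<in> B'" for g
    proof -
      have "g \<in> B\<^sub>1" "g \<in> B\<^sub>2"
        using g B' by auto
      then obtain h where h: "g = zmult c h"
        using B\<^sub>1 by blast
      then obtain k where "zmult c k = 0" "\<forall>i<r. norm (\<chi>s i (h + k) - 1) < \<epsilon>"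
        using B\<^sub>2 \<open>g \<in> B\<^sub>2\<close> by blast
      then have "h + k \<in> B" "g = zmult c (h + k)"
        using h by (simp_all add: B zmult_add_right)
      then show ?thesis
        by (intro image_eqI)
    qed
    then have "B' \<subseteq> zmult c ` B" ..
    then show ?thesis
      using \<open>bohr_nbhd B'\<close> by blast
  qed
qed

end
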